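(* Let $n\ge2$ and let $\phi_1(x),\dots,\phi_n(x)$ be functions of $x$. Let $J=J_{n+1}$ be the $(n+1)\times(n+1)$ matrix, with rows and columns indexed $0,\dots,n$, whose only nonzero entries are $J_{k,n-k}=(-1)^k$ (so $XJY^T=\sum_{k=0}^n(-1)^kx_ky_{n-k}$). For $0\le i\le n$ define the vector of $n+1$ functions $$\delta_i\tilde F(x)=(\underbrace{0,\dots,0}_{i},1,\mathcal I(i+1),\mathcal I(i+1,i+2),\dots,\mathcal I(i+1,i+2,\dots,n)),$$ so $\delta_0\tilde F=\tilde F=(1,\mathcal I(1),\mathcal I(1,2),\dots,\mathcal I(1,\dots,n))$. Let $s(a)=n+1-a$ for $1\le a\le n$, and let $s$ act on iterated integrals by $s\,\mathcal I(a_1\cdots a_m)=\mathcal I(s(a_1)\cdots s(a_m))$ and componentwise on vectors of iterated integrals (fixing constants). Then for $0\le i,j\le n$, $$(\delta_i\tilde F)J(s\delta_j\tilde F)^T=0\ \text{ if } i+j\ne n,\qquad (\delta_i\tilde F)J(s\delta_j\tilde F)^T=(-1)^i\ \text{ if } i+j=n.$$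
   Context: Iterated integrals: $\mathcal I(a_1\cdots a_k)(x)=\int_0^x\phi_{a_1}(x_1)\,dx_1\int_0^{x_1}\phi_{a_2}(x_2)\,dx_2\cdots\int_0^{x_{k-1}}\phi_{a_k}(x_k)\,dx_k$ with $\mathcal I(\varnothing)=1$. *)

theory Defs
  imports "HOL-Analysis.Analysis"
begin

definition oint :: "real \<Rightarrow> (real \<Rightarrow> real) \<Rightarrow> real" where
  "oint x f = (if 0 \<le> x then integral {0..x} f else - integral {x..0} f)"

fun iter_int :: "(nat \<Rightarrow> real \<Rightarrow> real) \<Rightarrow> nat list \<Rightarrow> real \<Rightarrow> real" where
  "iter_int \<phi> [] x = 1"
| "iter_int \<phi> (a # as) x = oint x (\<lambda>t. \<phi> a t * iter_int \<phi> as t)"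

definition deltaF :: "(nat \<Rightarrow> real \<Rightarrow> real) \<Rightarrow> nat \<Rightarrow> nat \<Rightarrow> real \<Rightarrow> real" where
  "deltaF \<phi> i k x = (if k < i then 0 else iter_int \<phi> [i+1..<k+1] x)"

definition s_letter :: "nat \<Rightarrow> nat \<Rightarrow> nat" where
  "s_letter n a = n + 1 - a"

definition s_deltaF :: "(nat \<Rightarrow> real \<Rightarrow> real) \<Rightarrow> nat \<Rightarrow> nat \<Rightarrow> nat \<Rightarrow> real \<Rightarrow> real" where
  "s_deltaF \<phi> n j k x = (if k < j then 0 else iter_int \<phi> (map (s_letter n) [j+1..<k+1]) x)"

definition Jmat :: "nat \<Rightarrow> nat \<Rightarrow> nat \<Rightarrow> real" where
  "Jmat n k l = (if k + l = n then (-1) ^ k else 0)"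

definition bilin :: "nat \<Rightarrow> (nat \<Rightarrow> real) \<Rightarrow> (nat \<Rightarrow> real) \<Rightarrow> real" where
  "bilin n X Y = (\<Sum>k\<in>{0..n}. \<Sum>l\<in>{0..n}. X k * Jmat n k l * Y l)"

end

theory Submission
  imports Defs
begin

text \<open>For a nonempty word \<open>w = a\<^sub>1\<cdots>a\<^sub>m\<close> the alternating deconcatenation sum
  \<open>S(w) = \<Sum>\<^sub>k (-1)\<^sup>k \<I>(a\<^sub>1\<cdots>a\<^sub>k) \<I>(a\<^sub>m\<cdots>a\<^sub>k\<^sub>+\<^sub>1)\<close> vanishes identically: it is 0 at
  \<open>x = 0\<close>, and since differentiating an iterated integral strips its first letter, the derivative
  of \<open>S(w)\<close> for \<open>w = a v = u b\<close> telescopes to \<open>\<phi>\<^sub>b S(u) - \<phi>\<^sub>a S(v)\<close>, which vanishes by induction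
  on the length. The entries of \<open>\<delta>\<^sub>i F\<close> and \<open>s \<delta>\<^sub>j F\<close> paired by \<open>J\<close> are exactly the two
  factors of \<open>S((i+1)\<cdots>(n-j))\<close>, because \<open>s\<close> maps \<open>(j+1)\<cdots>(n-k)\<close> to the reversal of
  \<open>(k+1)\<cdots>(n-j)\<close>; when \<open>i + j \<ge> n\<close> at most the single entry \<open>k = i\<close> survives.\<close>

lemma oint_has_real_derivative:
  fixes f :: "real \<Rightarrow> real"
  assumes cont: "continuous_on UNIV f"
  shows "((\<lambda>y. oint y f) has_real_derivative f x) (at x)"
proof -
  define a where "a = min x 0 - 1"
  define b where "b = max x 0 + 1"
  have ab: "a \<le> 0" "0 \<le> b" "a < x" "x < b" by (auto simp: a_def b_def)
  have int: "f integrable_on {c..d}" for c d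
    by (rule integrable_continuous_real) (rule continuous_on_subset[OF cont], auto)
  have oint_eq: "oint y f = integral {a..y} f - integral {a..0} f" if "y \<in> {a<..<b}" for y
  proof (cases "0 \<le> y")
    case True
    have "integral {a..0} f + integral {0..y} f = integral {a..y} f"
      by (rule Henstock_Kurzweil_Integration.integral_combine) (use True ab int in auto)
    then show ?thesis using True by (auto simp: oint_def)
  next
    case False
    have "integral {a..y} f + integral {y..0} f = integral {a..0} f"
      by (rule Henstock_Kurzweil_Integration.integral_combine) (use False ab int that in auto)
    then show ?thesis using False by (auto simp: oint_def)
  qed
  have "((\<lambda>y. integral {a..y} f) has_real_derivative f x) (at x within {a..b})"
    by (rule integral_has_real_derivative)
      (auto intro: continuous_on_subset[OF cont] simp: ab less_imp_le)
  then have "((\<lambda>y. integral {a..y} f) has_real_derivative f x) (at x within {a<..<b})"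
    by (rule DERIV_subset) auto
  then have "((\<lambda>y. integral {a..y} f) has_real_derivative f x) (at x)"
    using ab by (metis at_within_open greaterThanLessThan_iff open_greaterThanLessThan)
  then have "((\<lambda>y. integral {a..y} f - integral {a..0} f) has_real_derivative f x) (at x)"
    by (auto intro!: derivative_eq_intros)
  then show ?thesis
    by (rule has_field_derivative_transform_within_open[where S="{a<..<b}"])
      (use ab oint_eq in auto)
qed

lemma has_real_derivative_iter_int_Cons:
  assumes "continuous_on UNIV (\<lambda>t. \<phi> a t * iter_int \<phi> w t)"
  shows "(iter_int \<phi> (a # w) has_real_derivative \<phi> a x * iter_int \<phi> w x) (at x)"
proof -
  have "iter_int \<phi> (a # w) = (\<lambda>y. oint y (\<lambda>t. \<phi> a t * iter_int \<phi> w t))"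
    by (rule ext) simp
  then show ?thesis using oint_has_real_derivative[OF assms] by simp
qed

lemma continuous_on_iter_int:
  "(\<And>b. b \<in> set w \<Longrightarrow> continuous_on UNIV (\<phi> b)) \<Longrightarrow> continuous_on UNIV (iter_int \<phi> w)"
proof (induction w)
  case (Cons a w)
  then have "continuous_on UNIV (\<lambda>t. \<phi> a t * iter_int \<phi> w t)"
    by (auto intro!: continuous_intros)
  then have "isCont (iter_int \<phi> (a # w)) x" for x
    by (rule DERIV_isCont[OF has_real_derivative_iter_int_Cons])
  then show ?case by (auto intro: continuous_at_imp_continuous_on simp del: iter_int.simps)
qed simp

definition iter_int_deriv :: "(nat \<Rightarrow> real \<Rightarrow> real) \<Rightarrow> nat list \<Rightarrow> real \<Rightarrow> real" where
  "iter_int_deriv \<phi> w x = (case w of [] \<Rightarrow> 0 | a # v \<Rightarrow> \<phi> a x * iter_int \<phi> v x)"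

lemma has_real_derivative_iter_int:
  assumes "\<And>b. b \<in> set w \<Longrightarrow> continuous_on UNIV (\<phi> b)"
  shows "(iter_int \<phi> w has_real_derivative iter_int_deriv \<phi> w x) (at x)"
proof (cases w)
  case Nil
  have "iter_int \<phi> [] = (\<lambda>_. 1)" by (rule ext) simp
  then show ?thesis using Nil by (simp add: iter_int_deriv_def)
next
  case (Cons a v)
  have "continuous_on UNIV (\<lambda>t. \<phi> a t * iter_int \<phi> v t)"
    using assms Cons by (auto intro!: continuous_intros continuous_on_iter_int)
  then show ?thesis
    using Cons by (simp add: iter_int_deriv_def has_real_derivative_iter_int_Cons)
qed

lemma iter_int_at_0: "w \<noteq> [] \<Longrightarrow> iter_int \<phi> w 0 = 0"
  by (cases w) (auto simp: oint_def)

definition deconc_sum :: "(nat \<Rightarrow> real \<Rightarrow> real) \<Rightarrow> nat list \<Rightarrow> real \<Rightarrow> real" where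
  "deconc_sum \<phi> w x =
     (\<Sum>k\<le>length w. (-1)^k * iter_int \<phi> (take k w) x * iter_int \<phi> (rev (drop k w)) x)"

lemma deconc_sum_at_0: "w \<noteq> [] \<Longrightarrow> deconc_sum \<phi> w 0 = 0"
  unfolding deconc_sum_def
proof (intro sum.neutral ballI)
  fix k assume "w \<noteq> []" "k \<in> {..length w}"
  then have "take k w \<noteq> [] \<or> drop k w \<noteq> []" by (cases k) auto
  then show "(-1)^k * iter_int \<phi> (take k w) 0 * iter_int \<phi> (rev (drop k w)) 0 = 0"
    by (auto simp: iter_int_at_0)
qed

lemma deconc_sum_has_real_derivative:
  assumes cont: "\<And>c. c \<in> set w \<Longrightarrow> continuous_on UNIV (\<phi> c)"
    and first: "w = a # v" and last: "w = u @ [b]"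
  shows "(deconc_sum \<phi> w has_real_derivative
           \<phi> b x * deconc_sum \<phi> u x - \<phi> a x * deconc_sum \<phi> v x) (at x)"
proof -
  let ?L = "\<lambda>k. iter_int \<phi> (take k w)" and ?R = "\<lambda>k. iter_int \<phi> (rev (drop k w))"
  have "(?L k has_real_derivative iter_int_deriv \<phi> (take k w) x) (at x)" for k
    using cont by (intro has_real_derivative_iter_int) (meson in_set_takeD)
  moreover have "(?R k has_real_derivative iter_int_deriv \<phi> (rev (drop k w)) x) (at x)" for k
    using cont by (intro has_real_derivative_iter_int) (metis in_set_dropD set_rev)
  ultimately have "(deconc_sum \<phi> w has_real_derivative
      (\<Sum>k\<le>length w. (-1)^k * (iter_int_deriv \<phi> (take k w) x * ?R k x)) +
      (\<Sum>k\<le>length w. (-1)^k * (?L k x * iter_int_deriv \<phi> (rev (drop k w)) x))) (at x)"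
    unfolding deconc_sum_def [abs_def]
    by (auto intro!: derivative_eq_intros simp: sum.distrib[symmetric] algebra_simps)
  also have "(\<Sum>k\<le>length w. (-1)^k * (iter_int_deriv \<phi> (take k w) x * ?R k x))
      = - (\<phi> a x * deconc_sum \<phi> v x)"
    unfolding first deconc_sum_def
    by (simp add: sum.atMost_Suc_shift iter_int_deriv_def sum_distrib_left sum_negf
        algebra_simps del: sum.atMost_Suc)
  also have "(\<Sum>k\<le>length w. (-1)^k * (?L k x * iter_int_deriv \<phi> (rev (drop k w)) x))
      = \<phi> b x * deconc_sum \<phi> u x"
    unfolding last deconc_sum_def sum_distrib_left
    by (simp add: iter_int_deriv_def) (auto intro!: sum.cong simp: iter_int_deriv_def)
  finally show ?thesis by simp
qed

lemma deconc_sum_eq_0: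
  assumes "w \<noteq> []" and "\<And>c. c \<in> set w \<Longrightarrow> continuous_on UNIV (\<phi> c)"
  shows "deconc_sum \<phi> w x = 0"
  using assms
proof (induction "length w" arbitrary: w x rule: less_induct)
  case less
  obtain a v where first: "w = a # v" using less.prems by (cases w) auto
  obtain u b where last: "w = u @ [b]" using less.prems by (cases w rule: rev_exhaust) auto
  have derivative_0: "\<phi> b y * deconc_sum \<phi> u y - \<phi> a y * deconc_sum \<phi> v y = 0" for y
  proof (cases "v = []")
    case True
    then have "u = []" "a = b" using first last by (auto simp: Cons_eq_append_conv)
    then show ?thesis using True by simp
  next
    case False
    then have "u \<noteq> []" using first last by (cases u) auto
    moreover have "deconc_sum \<phi> v y = 0"
      using less.hyps[of v] False less.prems first by auto
    moreover have "deconc_sum \<phi> u y = 0"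
      using less.hyps[of u] \<open>u \<noteq> []\<close> less.prems last by auto
    ultimately show ?thesis by simp
  qed
  have "(deconc_sum \<phi> w has_real_derivative 0) (at y)" for y
    using deconc_sum_has_real_derivative[where \<phi>=\<phi> and x=y, OF less.prems(2) first last]
    by (simp add: derivative_0)
  then have "\<forall>y. (deconc_sum \<phi> w has_real_derivative 0) (at y)" by blast
  then have "deconc_sum \<phi> w x = deconc_sum \<phi> w 0" by (rule DERIV_isconst_all)
  then show ?case using deconc_sum_at_0[OF less.prems(1)] by simp
qed

lemma map_s_letter_upt:
  assumes "k + j \<le> n"
  shows "map (s_letter n) [j+1..<n-k+1] = rev [k+1..<n-j+1]"
  using assms by (intro nth_equalityI) (auto simp: rev_nth s_letter_def simp del: upt_Suc)

lemma bilin_Jmat: "bilin n X Y = (\<Sum>k\<in>{0..n}. (-1)^k * X k * Y (n - k))"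
proof -
  have "(\<Sum>l\<in>{0..n}. X k * Jmat n k l * Y l) = (-1)^k * X k * Y (n - k)" if "k \<le> n" for k
  proof -
    have "(\<Sum>l\<in>{0..n}. X k * Jmat n k l * Y l)
        = (\<Sum>l\<in>{0..n}. if l = n - k then (-1)^k * X k * Y (n - k) else 0)"
      using that by (intro sum.cong) (auto simp: Jmat_def)
    then show ?thesis using that by simp
  qed
  then show ?thesis unfolding bilin_def by (intro sum.cong) auto
qed

lemma bilin_deltaF_s_deltaF_high:
  assumes "n \<le> i + j" and "i \<le> n"
  shows "bilin n (\<lambda>k. deltaF \<phi> i k x) (\<lambda>k. s_deltaF \<phi> n j k x)
           = (if i + j = n then (-1) ^ i else 0)"
proof -
  have "bilin n (\<lambda>k. deltaF \<phi> i k x) (\<lambda>k. s_deltaF \<phi> n j k x)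
      = (\<Sum>k\<in>{0..n}. if k = i then (if i + j = n then (-1) ^ i else 0) else 0)"
    unfolding bilin_Jmat
    by (rule sum.cong[OF refl]) (use assms in \<open>auto simp: deltaF_def s_deltaF_def\<close>)
  then show ?thesis using assms by simp
qed

lemma bilin_deltaF_s_deltaF_low:
  assumes "i + j < n"
  shows "bilin n (\<lambda>k. deltaF \<phi> i k x) (\<lambda>k. s_deltaF \<phi> n j k x)
           = (-1)^i * deconc_sum \<phi> [i+1..<n-j+1] x"
proof -
  define m where "m = n - j"
  define w where "w = [i+1..<m+1]"
  define g where "g k = (-1)^k * deltaF \<phi> i k x * s_deltaF \<phi> n j (n - k) x" for k
  have im: "i < m" "m \<le> n" using assms by (auto simp: m_def)
  have "bilin n (\<lambda>k. deltaF \<phi> i k x) (\<lambda>k. s_deltaF \<phi> n j k x) = (\<Sum>k\<in>{i..m}. g k)"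
    unfolding bilin_Jmat g_def
    by (rule sum.mono_neutral_right)
      (use im in \<open>auto simp: deltaF_def s_deltaF_def m_def\<close>)
  also have "\<dots> = (\<Sum>t\<in>{0..m-i}. g (t + i))"
    using sum.shift_bounds_cl_nat_ivl[of g 0 i "m - i"] im by simp
  also have "\<dots> = (\<Sum>t\<le>length w.
      (-1)^i * ((-1)^t * iter_int \<phi> (take t w) x * iter_int \<phi> (rev (drop t w)) x))"
  proof (rule sum.cong)
    fix t assume "t \<in> {..length w}"
    then have t: "t + i \<le> m" using im by (simp add: w_def)
    have "take t w = [i+1..<t+i+1]"
      unfolding w_def by (subst take_upt) (use t in \<open>auto simp: ac_simps\<close>)
    moreover have "rev (drop t w) = map (s_letter n) [j+1..<n-(t+i)+1]"
      using map_s_letter_upt[of "t+i" j n] t im by (simp add: w_def m_def add.commute)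
    ultimately show "g (t + i) =
        (-1)^i * ((-1)^t * iter_int \<phi> (take t w) x * iter_int \<phi> (rev (drop t w)) x)"
      using t im by (simp add: g_def deltaF_def s_deltaF_def m_def power_add)
  qed (auto simp: w_def)
  also have "\<dots> = (-1)^i * deconc_sum \<phi> w x"
    by (simp only: deconc_sum_def sum_distrib_left)
  finally show ?thesis by (simp only: w_def m_def)
qed

theorem proposition5p5:
  fixes \<phi> :: "nat \<Rightarrow> real \<Rightarrow> real" and n i j :: nat and x :: real
  assumes "n \<ge> 2"
    and "\<And>a. a \<in> {1..n} \<Longrightarrow> continuous_on UNIV (\<phi> a)"
    and "i \<le> n" and "j \<le> n"
  shows "bilin n (\<lambda>k. deltaF \<phi> i k x) (\<lambda>k. s_deltaF \<phi> n j k x)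
           = (if i + j = n then (-1) ^ i else 0)"
proof (cases "n \<le> i + j")
  case True
  then show ?thesis using assms(3) by (rule bilin_deltaF_s_deltaF_high)
next
  case False
  define w where "w = [i+1..<n-j+1]"
  have "w \<noteq> []" using False by (simp add: w_def)
  moreover have "continuous_on UNIV (\<phi> c)" if "c \<in> set w" for c
    using that assms(2) by (auto simp: w_def simp del: upt_Suc)
  ultimately have "deconc_sum \<phi> w x = 0" by (rule deconc_sum_eq_0)
  moreover have "bilin n (\<lambda>k. deltaF \<phi> i k x) (\<lambda>k. s_deltaF \<phi> n j k x)
      = (-1)^i * deconc_sum \<phi> w x"
    unfolding w_def using False by (intro bilin_deltaF_s_deltaF_low) simp
  ultimately show ?thesis using False by simp
qed

end
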